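(* Consider the two-agent zero-sum dynamic game with $K$ stages, dynamics constraints, and control bound constraints $a^i_t\le u^i_t\le b^i_t$ described in the context. Let $(x^*_{1:K+1},u^{1*}_{1:K},u^{2*}_{1:K})$ be the states and controls of a local OLNE at which strict complementarity holds, with multipliers $\lambda^i_t,\underline\nu^i_t,\bar\nu^i_t$ satisfying (COL1)–(COL6), and let $\pi^i_t$ be differentiable feedback policies with $\pi^i_t(x^*_t)=u^{i*}_t$ satisfying the standing policy assumption. Then for every $t\in[K]$ and $i$, the trajectory satisfies the feedback first-order conditions (CFB1)–(CFB7) with multipliers $\lambda^i_s,\underline\nu^i_s,\bar\nu^i_s$ ($s\in T_t$) and $\psi^i_s=\bar\nu^{-i}_s-\underline\nu^{-i}_s$ ($s\in T_{t+1}$); i.e., it satisfies the first-order necessary conditions for a local FBNE.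
   Context: Two-agent zero-sum discrete-time dynamic game with horizon $K\in\mathbb N$. States $x_t\in\mathbb R^n$, known initial state $x_1$; controls $u^i_t\in\mathbb R^{m_i}$, $i\in\{1,2\}$, subject to componentwise bounds $a^i_t\le u^i_t\le b^i_t$. Dynamics $x_{t+1}=f_t(x_t,u^1_t,u^2_t)$, $f_t$ smooth. Agent 1 has stage costs $\ell_t(x_t,u^1_t,u^2_t)$ and terminal cost $\ell_{K+1}(x_{K+1})$; $\ell^1_t=\ell_t$, $\ell^2_t=-\ell_t$, sufficiently smooth. For agent $i$, $-i$ is the other agent; reordered arguments $\ell^i_t(x_t,u^i_t,u^{-i}_t)$, $f_t(x_t,u^i_t,u^{-i}_t)$. $T_t:=\{t,\dots,K\}$. $\perp$ denotes componentwise complementarity. $J=\sum_t\ell_t+\ell_{K+1}$ along the unrolled trajectory; a local OLNE is a feasible pair of control sequences such that neither agent can decrease its cost ($J$ for agent 1, $-J$ for agent 2) by a feasible unilateral change within a neighborhood. Open-loop first-order conditions: for each $i$ there exist $\lambda^i_t,\underline\nu^i_t,\bar\nu^i_t$ ($t\in[K]$) with (COL1) $\nabla_{x_t}\ell^i_t+(\nabla_{x_t}f_t)^\top\lambda^i_t-\lambda^i_{t-1}=0$, $t=2,\dots,K$; (COL2) $\nabla_{u^i_t}\ell^i_t+(\nabla_{u^i_t}f_t)^\top\lambda^i_t-\underline\nu^i_t+\bar\nu^i_t=0$, $t\in[K]$; (COL3) $\nabla_{x_{K+1}}\ell^i_{K+1}-\lambda^i_K=0$; (COL4) dynamics hold;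 (COL5) $a^i_t\le u^i_t\perp\underline\nu^i_t\ge0$; (COL6) $0\le\bar\nu^i_t\perp u^i_t\le b^i_t$. Feedback first-order conditions for agent $i$ at time $t$ (KKT of minimizing $\sum_{s=t}^K\ell^i_s+\ell^i_{K+1}$ over $u^i_{t:K},u^{-i}_{t+1:K},x_{t+1:K+1}$ s.t. dynamics ($s\in T_t$), $u^{-i}_s=\pi^{-i}_s(x_s)$ ($s\in T_{t+1}$), $a^i_s\le u^i_s\le b^i_s$ ($s\in T_t$)): there exist $\lambda^i_s,\underline\nu^i_s,\bar\nu^i_s$ ($s\in T_t$), $\psi^i_s$ ($s\in T_{t+1}$) with (CFB1) $\nabla_{u^{-i}_s}\ell^i_s+(\nabla_{u^{-i}_s}f_s)^\top\lambda^i_s-\psi^i_s=0$, $s\in T_{t+1}$; (CFB2) $\nabla_{u^i_s}\ell^i_s+(\nabla_{u^i_s}f_s)^\top\lambda^i_s-\underline\nu^i_s+\bar\nu^i_s=0$, $s\in T_t$; (CFB3) $\nabla_{x_{K+1}}\ell^i_{K+1}-\lambda^i_K=0$; (CFB4) dynamics for $s\in T_t$; (CFB5) $u^{-i}_s=\pi^{-i}_s(x_s)$, $s\in T_{t+1}$; (CFB6) $a^i_s\le u^i_s\perp\underline\nu^i_s\ge0$, $0\le\bar\nu^i_s\perp u^i_s\le b^i_s$, $s\in T_t$; (CFB7) $\nabla_{x_s}\ell^i_s-\lambda^i_{s-1}+(\nabla_{x_s}f_s)^\top\lambda^i_s+(\nabla_{x_s}\pi^{-i}_s)^\top\psi^i_s=0$,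 $s\in T_{t+1}$. Strict complementarity: for every component $j$, exactly one of $[u^i_s]_j-[a^i_s]_j$ and $[\underline\nu^i_s]_j$ is zero, and exactly one of $[b^i_s]_j-[u^i_s]_j$ and $[\bar\nu^i_s]_j$ is zero. Standing policy assumption (taken as a consequence of strict complementarity): whenever a bound on $[u^i_s]_j$ is active, the $j$-th row of $\nabla_{x_s}\pi^i_s(x_s)$ is zero. *)

theory Defs
  imports "HOL-Analysis.Analysis"
begin

text \<open>Transposed Jacobian times a vector: (\<nabla>g(z))^T y, via the adjoint of the
  Frechet derivative. For scalar g, the gradient is the transposed Jacobian applied to 1.\<close>
definition jacT :: "('a::euclidean_space \<Rightarrow> 'b::euclidean_space) \<Rightarrow> 'a \<Rightarrow> 'b \<Rightarrow> 'a" where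
  "jacT g z y = adjoint (frechet_derivative g (at z)) y"

definition grad :: "('a::euclidean_space \<Rightarrow> real) \<Rightarrow> 'a \<Rightarrow> 'a" where
  "grad g z = jacT g z 1"

text \<open>Unrolled state trajectory; index 0 is unused, x_1 = x1.\<close>
fun traj :: "(nat \<Rightarrow> 'x \<Rightarrow> 'u \<Rightarrow> 'v \<Rightarrow> 'x) \<Rightarrow> 'x \<Rightarrow> (nat \<Rightarrow> 'u) \<Rightarrow> (nat \<Rightarrow> 'v) \<Rightarrow> nat \<Rightarrow> 'x" where
  "traj f x1 u v 0 = x1"
| "traj f x1 u v (Suc 0) = x1"
| "traj f x1 u v (Suc (Suc t)) = f (Suc t) (traj f x1 u v (Suc t)) (u (Suc t)) (v (Suc t))"

definition Jcost :: "nat \<Rightarrow> (nat \<Rightarrow> 'x \<Rightarrow> 'u \<Rightarrow> 'v \<Rightarrow> 'x) \<Rightarrow> (nat \<Rightarrow> 'x \<Rightarrow> 'u \<Rightarrow> 'v \<Rightarrow> real)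
    \<Rightarrow> ('x \<Rightarrow> real) \<Rightarrow> 'x \<Rightarrow> (nat \<Rightarrow> 'u) \<Rightarrow> (nat \<Rightarrow> 'v) \<Rightarrow> real" where
  "Jcost K f l lT x1 u v =
     (\<Sum>t=1..K. l t (traj f x1 u v t) (u t) (v t)) + lT (traj f x1 u v (K+1))"

definition feasible :: "nat \<Rightarrow> (nat \<Rightarrow> real^'m) \<Rightarrow> (nat \<Rightarrow> real^'m) \<Rightarrow> (nat \<Rightarrow> real^'m) \<Rightarrow> bool" where
  "feasible K a b u \<longleftrightarrow> (\<forall>t\<in>{1..K}. \<forall>j. a t $ j \<le> u t $ j \<and> u t $ j \<le> b t $ j)"

definition local_OLNE ::
  "nat \<Rightarrow> (nat \<Rightarrow> 'x \<Rightarrow> real^'m1 \<Rightarrow> real^'m2 \<Rightarrow> 'x) \<Rightarrow> (nat \<Rightarrow> 'x \<Rightarrow> real^'m1 \<Rightarrow> real^'m2 \<Rightarrow> real)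
   \<Rightarrow> ('x \<Rightarrow> real) \<Rightarrow> 'x \<Rightarrow> (nat \<Rightarrow> real^'m1) \<Rightarrow> (nat \<Rightarrow> real^'m1) \<Rightarrow> (nat \<Rightarrow> real^'m2) \<Rightarrow> (nat \<Rightarrow> real^'m2)
   \<Rightarrow> (nat \<Rightarrow> real^'m1) \<Rightarrow> (nat \<Rightarrow> real^'m2) \<Rightarrow> bool" where
  "local_OLNE K f l lT x1 a1 b1 a2 b2 u1 u2 \<longleftrightarrow>
     feasible K a1 b1 u1 \<and> feasible K a2 b2 u2 \<and>
     (\<exists>\<epsilon>>0.
        (\<forall>w. feasible K a1 b1 w \<and> (\<forall>t\<in>{1..K}. dist (w t) (u1 t) < \<epsilon>)
              \<longrightarrow> Jcost K f l lT x1 u1 u2 \<le> Jcost K f l lT x1 w u2) \<and>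
        (\<forall>w. feasible K a2 b2 w \<and> (\<forall>t\<in>{1..K}. dist (w t) (u2 t) < \<epsilon>)
              \<longrightarrow> - Jcost K f l lT x1 u1 u2 \<le> - Jcost K f l lT x1 u1 w))"

definition compl_lower :: "real^'m \<Rightarrow> real^'m \<Rightarrow> real^'m \<Rightarrow> bool" where
  "compl_lower a u \<nu> \<longleftrightarrow> (\<forall>j. a $ j \<le> u $ j \<and> 0 \<le> \<nu> $ j \<and> (u $ j - a $ j) * \<nu> $ j = 0)"

definition compl_upper :: "real^'m \<Rightarrow> real^'m \<Rightarrow> real^'m \<Rightarrow> bool" where
  "compl_upper b u \<nu> \<longleftrightarrow> (\<forall>j. u $ j \<le> b $ j \<and> 0 \<le> \<nu> $ j \<and> (b $ j - u $ j) * \<nu> $ j = 0)"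

text \<open>Open-loop first-order conditions (COL1)-(COL6) for an agent written in
  (own control, other control) form: L = \<ell>^i, F = f with reordered arguments.\<close>
definition OL_FOC ::
  "nat \<Rightarrow> (nat \<Rightarrow> 'x::euclidean_space \<Rightarrow> real^'mo \<Rightarrow> 'uq \<Rightarrow> real) \<Rightarrow> ('x \<Rightarrow> real)
   \<Rightarrow> (nat \<Rightarrow> 'x \<Rightarrow> real^'mo \<Rightarrow> 'uq \<Rightarrow> 'x) \<Rightarrow> (nat \<Rightarrow> real^'mo) \<Rightarrow> (nat \<Rightarrow> real^'mo)
   \<Rightarrow> (nat \<Rightarrow> 'x) \<Rightarrow> (nat \<Rightarrow> real^'mo) \<Rightarrow> (nat \<Rightarrow> 'uq)
   \<Rightarrow> (nat \<Rightarrow> 'x) \<Rightarrow> (nat \<Rightarrow> real^'mo) \<Rightarrow> (nat \<Rightarrow> real^'mo) \<Rightarrow> bool" where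
  "OL_FOC K L Lfin F a b xs uo uq lam nl nu \<longleftrightarrow>
     (\<forall>t\<in>{2..K}. grad (\<lambda>x. L t x (uo t) (uq t)) (xs t)
                 + jacT (\<lambda>x. F t x (uo t) (uq t)) (xs t) (lam t) - lam (t-1) = 0) \<and>
     (\<forall>t\<in>{1..K}. grad (\<lambda>u. L t (xs t) u (uq t)) (uo t)
                 + jacT (\<lambda>u. F t (xs t) u (uq t)) (uo t) (lam t) - nl t + nu t = 0) \<and>
     grad Lfin (xs (K+1)) - lam K = 0 \<and>
     (\<forall>t\<in>{1..K}. xs (t+1) = F t (xs t) (uo t) (uq t)) \<and>
     (\<forall>t\<in>{1..K}. compl_lower (a t) (uo t) (nl t)) \<and>
     (\<forall>t\<in>{1..K}. compl_upper (b t) (uo t) (nu t))"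

text \<open>Feedback first-order conditions (CFB1)-(CFB7) for an agent at time t,
  with the given multipliers; piq is the other agent's feedback policy.\<close>
definition FB_FOC ::
  "nat \<Rightarrow> nat \<Rightarrow> (nat \<Rightarrow> 'x::euclidean_space \<Rightarrow> real^'mo \<Rightarrow> real^'mq \<Rightarrow> real) \<Rightarrow> ('x \<Rightarrow> real)
   \<Rightarrow> (nat \<Rightarrow> 'x \<Rightarrow> real^'mo \<Rightarrow> real^'mq \<Rightarrow> 'x) \<Rightarrow> (nat \<Rightarrow> real^'mo) \<Rightarrow> (nat \<Rightarrow> real^'mo)
   \<Rightarrow> (nat \<Rightarrow> 'x \<Rightarrow> real^'mq)
   \<Rightarrow> (nat \<Rightarrow> 'x) \<Rightarrow> (nat \<Rightarrow> real^'mo) \<Rightarrow> (nat \<Rightarrow> real^'mq)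
   \<Rightarrow> (nat \<Rightarrow> 'x) \<Rightarrow> (nat \<Rightarrow> real^'mo) \<Rightarrow> (nat \<Rightarrow> real^'mo) \<Rightarrow> (nat \<Rightarrow> real^'mq) \<Rightarrow> bool" where
  "FB_FOC K t L Lfin F a b piq xs uo uq lam nl nu psi \<longleftrightarrow>
     (\<forall>s\<in>{t+1..K}. grad (\<lambda>v. L s (xs s) (uo s) v) (uq s)
                    + jacT (\<lambda>v. F s (xs s) (uo s) v) (uq s) (lam s) - psi s = 0) \<and>
     (\<forall>s\<in>{t..K}. grad (\<lambda>u. L s (xs s) u (uq s)) (uo s)
                  + jacT (\<lambda>u. F s (xs s) u (uq s)) (uo s) (lam s) - nl s + nu s = 0) \<and>
     grad Lfin (xs (K+1)) - lam K = 0 \<and>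
     (\<forall>s\<in>{t..K}. xs (s+1) = F s (xs s) (uo s) (uq s)) \<and>
     (\<forall>s\<in>{t+1..K}. uq s = piq s (xs s)) \<and>
     (\<forall>s\<in>{t..K}. compl_lower (a s) (uo s) (nl s) \<and> compl_upper (b s) (uo s) (nu s)) \<and>
     (\<forall>s\<in>{t+1..K}. grad (\<lambda>x. L s x (uo s) (uq s)) (xs s) - lam (s-1)
                    + jacT (\<lambda>x. F s x (uo s) (uq s)) (xs s) (lam s)
                    + jacT (piq s) (xs s) (psi s) = 0)"

definition strict_compl :: "nat \<Rightarrow> (nat \<Rightarrow> real^'m) \<Rightarrow> (nat \<Rightarrow> real^'m) \<Rightarrow> (nat \<Rightarrow> real^'m)
   \<Rightarrow> (nat \<Rightarrow> real^'m) \<Rightarrow> (nat \<Rightarrow> real^'m) \<Rightarrow> bool" where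
  "strict_compl K a b u nl nu \<longleftrightarrow>
     (\<forall>s\<in>{1..K}. \<forall>j. ((u s $ j - a s $ j = 0) \<noteq> (nl s $ j = 0)) \<and>
                     ((b s $ j - u s $ j = 0) \<noteq> (nu s $ j = 0)))"

definition policy_assm :: "nat \<Rightarrow> (nat \<Rightarrow> 'x::euclidean_space \<Rightarrow> real^'m) \<Rightarrow> (nat \<Rightarrow> 'x)
   \<Rightarrow> (nat \<Rightarrow> real^'m) \<Rightarrow> (nat \<Rightarrow> real^'m) \<Rightarrow> (nat \<Rightarrow> real^'m) \<Rightarrow> bool" where
  "policy_assm K pol xs u a b \<longleftrightarrow>
     (\<forall>s\<in>{1..K}. \<forall>j. (u s $ j = a s $ j \<or> u s $ j = b s $ j)
        \<longrightarrow> (\<forall>h. frechet_derivative (pol s) (at (xs s)) h $ j = 0))"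

end

theory Submission imports Defs begin

text \<open>In a zero-sum game the adjoint recursions (COL1), (COL3) of the two agents have the same
  linear part and opposite inhomogeneous terms, so backward induction gives
  \<open>\<lambda>\<^sup>2 = -\<lambda>\<^sup>1\<close>. With this, the control stationarity (COL2) of agent \<open>-i\<close> is literally
  condition (CFB1) of agent \<open>i\<close>, with \<open>\<psi>\<^sup>i\<close> the difference of the upper and lower bound
  multipliers of agent \<open>-i\<close>. The policy term \<open>(\<nabla>\<pi>\<^sup>-\<^sup>i)\<^sup>T \<psi>\<^sup>i\<close> in (CFB7) vanishes: by
  complementarity a component of \<open>\<psi>\<^sup>i\<close> is nonzero only where a bound on \<open>u\<^sup>-\<^sup>i\<close> is active,
  and there the corresponding row of \<open>\<nabla>\<pi>\<^sup>-\<^sup>i\<close> is zero. The remaining feedback conditions are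
  open-loop conditions restricted to \<open>T\<^sub>t\<close>.\<close>

lemma linear_frechet_derivative_at:
  "f differentiable (at z) \<Longrightarrow> linear (frechet_derivative f (at z))"
  by (simp add: frechet_derivative_works has_derivative_linear)

lemma jacT_uminus: "g differentiable (at z) \<Longrightarrow> jacT g z (- y) = - jacT g z y"
  unfolding jacT_def using adjoint_linear[OF linear_frechet_derivative_at] linear_neg by blast

lemma grad_uminus:
  fixes g :: "'a::euclidean_space \<Rightarrow> real"
  assumes "g differentiable (at z)"
  shows "grad (\<lambda>x. - g x) z = - grad g z"
proof -
  let ?D = "frechet_derivative g (at z)"
  have "((\<lambda>x. - g x) has_derivative (\<lambda>h. - ?D h)) (at z)"
    using assms frechet_derivative_works has_derivative_minus by blast
  then have D_uminus: "frechet_derivative (\<lambda>x. - g x) (at z) = (\<lambda>h. - ?D h)"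
    by (rule frechet_derivative_at[symmetric])
  have "adjoint (\<lambda>h. - ?D h) = (\<lambda>y. - adjoint ?D y)"
    by (rule adjoint_unique) (simp add: adjoint_clauses[OF linear_frechet_derivative_at[OF assms]])
  then show ?thesis
    unfolding grad_def jacT_def D_uminus by simp
qed

lemma differentiable_at_partials:
  assumes "g differentiable (at (x, u, v))"
  shows "(\<lambda>x. g (x, u, v)) differentiable (at x)"
    and "(\<lambda>u. g (x, u, v)) differentiable (at u)"
    and "(\<lambda>v. g (x, u, v)) differentiable (at v)"
proof -
  have "((\<lambda>x. (x, u, v)) has_derivative (\<lambda>h. (h, 0, 0))) (at x)"
    "((\<lambda>u. (x, u, v)) has_derivative (\<lambda>h. (0, h, 0))) (at u)"
    "((\<lambda>v. (x, u, v)) has_derivative (\<lambda>h. (0, 0, h))) (at v)"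
    by (intro has_derivative_Pair has_derivative_ident has_derivative_const)+
  then have embeddings: "(\<lambda>x. (x, u, v)) differentiable (at x)"
    "(\<lambda>u. (x, u, v)) differentiable (at u)" "(\<lambda>v. (x, u, v)) differentiable (at v)"
    unfolding differentiable_def by blast+
  from embeddings[THEN differentiable_chain_at[unfolded o_def], OF assms]
  show "(\<lambda>x. g (x, u, v)) differentiable (at x)" "(\<lambda>u. g (x, u, v)) differentiable (at u)"
    "(\<lambda>v. g (x, u, v)) differentiable (at v)" .
qed

lemma jacT_eq_0_if_rows_vanish:
  fixes p :: "'a::euclidean_space \<Rightarrow> real^'m"
  assumes "p differentiable (at z)"
    and rows: "\<And>j. y $ j \<noteq> 0 \<Longrightarrow> \<forall>h. frechet_derivative p (at z) h $ j = 0"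
  shows "jacT p z y = 0"
proof -
  let ?D = "frechet_derivative p (at z)"
  have "adjoint ?D y \<bullet> h = 0" for h
  proof -
    have "adjoint ?D y \<bullet> h = (\<Sum>j\<in>UNIV. y $ j * ?D h $ j)"
      by (simp add: adjoint_clauses[OF linear_frechet_derivative_at[OF assms(1)]] inner_vec_def)
    also have "\<dots> = 0"
      by (rule sum.neutral) (use rows in fastforce)
    finally show ?thesis .
  qed
  from this[of "adjoint ?D y"] show ?thesis
    unfolding jacT_def by simp
qed

lemma compl_multiplier_nonzero_imp_active:
  assumes "compl_lower a u nl" "compl_upper b u nu" "(nu - nl) $ j \<noteq> 0"
  shows "u $ j = a $ j \<or> u $ j = b $ j"
proof -
  have "nl $ j \<noteq> 0 \<or> nu $ j \<noteq> 0"
    using assms(3) by auto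
  then show ?thesis
    using assms(1,2) unfolding compl_lower_def compl_upper_def by force
qed

lemma OL_FOC_policy_term_eq_0:
  assumes OL: "OL_FOC K L Lfin F a b xs u uq lam nl nu"
    and "policy_assm K pol xs u a b"
    and "\<And>s. pol s differentiable (at (xs s))"
  shows "\<forall>s\<in>{1..K}. jacT (pol s) (xs s) (nu s - nl s) = 0"
proof
  fix s assume s: "s \<in> {1..K}"
  have "compl_lower (a s) (u s) (nl s)" "compl_upper (b s) (u s) (nu s)"
    using OL s unfolding OL_FOC_def by auto
  then show "jacT (pol s) (xs s) (nu s - nl s) = 0"
    using assms(2,3) s compl_multiplier_nonzero_imp_active
    unfolding policy_assm_def by (intro jacT_eq_0_if_rows_vanish) blast+
qed

lemma backward_recursion_opposite:
  fixes p q :: "nat \<Rightarrow> 'a::real_vector"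
  assumes "q K = - p K"
    and p_step: "\<And>t. t \<in> {2..K} \<Longrightarrow> p (t - 1) = g t + A t (p t)"
    and q_step: "\<And>t. t \<in> {2..K} \<Longrightarrow> q (t - 1) = - g t + A t (q t)"
    and A_uminus: "\<And>t y. t \<in> {2..K} \<Longrightarrow> A t (- y) = - A t y"
  shows "\<forall>s\<in>{1..K}. q s = - p s"
proof
  fix s assume "s \<in> {1..K}"
  then have "s \<le> K" "1 \<le> s" by auto
  then show "q s = - p s"
  proof (induction s rule: inc_induct)
    case base
    show ?case by (fact assms(1))
  next
    case (step n)
    then have "Suc n \<in> {2..K}" by auto
    from p_step[OF this] q_step[OF this] A_uminus[OF this] show ?case
      using step.IH by simp
  qed
qed

lemma zero_sum_costates_opposite:
  fixes f :: "nat \<Rightarrow> real^'n \<Rightarrow> real^'m1 \<Rightarrow> real^'m2 \<Rightarrow> real^'n"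
    and l :: "nat \<Rightarrow> real^'n \<Rightarrow> real^'m1 \<Rightarrow> real^'m2 \<Rightarrow> real"
  assumes f_smooth: "\<And>t x u v. (\<lambda>(x, u, v). f t x u v) differentiable (at (x, u, v))"
    and l_smooth: "\<And>t x u v. (\<lambda>(x, u, v). l t x u v) differentiable (at (x, u, v))"
    and lT_smooth: "\<And>x. lT differentiable (at x)"
    and COL_1: "OL_FOC K l lT f a1 b1 xs u1 u2 lam1 nl1 nu1"
    and COL_2: "OL_FOC K (\<lambda>t x u v. - l t x v u) (\<lambda>x. - lT x) (\<lambda>t x u v. f t x v u)
                  a2 b2 xs u2 u1 lam2 nl2 nu2"
  shows "\<forall>s\<in>{1..K}. lam2 s = - lam1 s"
proof (rule backward_recursion_opposite[where
      g = "\<lambda>t. grad (\<lambda>x. l t x (u1 t) (u2 t)) (xs t)"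
      and A = "\<lambda>t. jacT (\<lambda>x. f t x (u1 t) (u2 t)) (xs t)"])
  have "grad lT (xs (K + 1)) = lam1 K" "- grad lT (xs (K + 1)) = lam2 K"
    using COL_1 COL_2 unfolding OL_FOC_def right_minus_eq grad_uminus[OF lT_smooth] by blast+
  then show "lam2 K = - lam1 K" by simp
next
  note l_x = differentiable_at_partials(1)[OF l_smooth, simplified]
  note f_x = differentiable_at_partials(1)[OF f_smooth, simplified]
  fix t y
  assume t: "t \<in> {2..K}"
  have "grad (\<lambda>x. l t x (u1 t) (u2 t)) (xs t)
          + jacT (\<lambda>x. f t x (u1 t) (u2 t)) (xs t) (lam1 t) = lam1 (t - 1)"
    "- grad (\<lambda>x. l t x (u1 t) (u2 t)) (xs t)
          + jacT (\<lambda>x. f t x (u1 t) (u2 t)) (xs t) (lam2 t) = lam2 (t - 1)"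
    using COL_1 COL_2 t unfolding OL_FOC_def right_minus_eq grad_uminus[OF l_x] by blast+
  then show "lam1 (t - 1) = grad (\<lambda>x. l t x (u1 t) (u2 t)) (xs t)
               + jacT (\<lambda>x. f t x (u1 t) (u2 t)) (xs t) (lam1 t)"
    and "lam2 (t - 1) = - grad (\<lambda>x. l t x (u1 t) (u2 t)) (xs t)
               + jacT (\<lambda>x. f t x (u1 t) (u2 t)) (xs t) (lam2 t)"
    by simp_all
  show "jacT (\<lambda>x. f t x (u1 t) (u2 t)) (xs t) (- y)
          = - jacT (\<lambda>x. f t x (u1 t) (u2 t)) (xs t) y"
    by (rule jacT_uminus[OF f_x])
qed

lemma zero_sum_opponent_stationarity:
  fixes f :: "nat \<Rightarrow> real^'n \<Rightarrow> real^'m1 \<Rightarrow> real^'m2 \<Rightarrow> real^'n"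
    and l :: "nat \<Rightarrow> real^'n \<Rightarrow> real^'m1 \<Rightarrow> real^'m2 \<Rightarrow> real"
  assumes f_smooth: "\<And>t x u v. (\<lambda>(x, u, v). f t x u v) differentiable (at (x, u, v))"
    and l_smooth: "\<And>t x u v. (\<lambda>(x, u, v). l t x u v) differentiable (at (x, u, v))"
    and COL_1: "OL_FOC K l lT f a1 b1 xs u1 u2 lam1 nl1 nu1"
    and COL_2: "OL_FOC K (\<lambda>t x u v. - l t x v u) (\<lambda>x. - lT x) (\<lambda>t x u v. f t x v u)
                  a2 b2 xs u2 u1 lam2 nl2 nu2"
    and costates: "\<forall>s\<in>{1..K}. lam2 s = - lam1 s"
  shows "\<forall>s\<in>{1..K}. grad (\<lambda>v. l s (xs s) (u1 s) v) (u2 s)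
           + jacT (\<lambda>v. f s (xs s) (u1 s) v) (u2 s) (lam1 s) - (nu2 s - nl2 s) = 0"
    and "\<forall>s\<in>{1..K}. grad (\<lambda>v. - l s (xs s) v (u2 s)) (u1 s)
           + jacT (\<lambda>v. f s (xs s) v (u2 s)) (u1 s) (lam2 s) - (nu1 s - nl1 s) = 0"
proof safe
  note l_v = differentiable_at_partials(3)[OF l_smooth, simplified]
  note f_v = differentiable_at_partials(3)[OF f_smooth, simplified]
  fix s assume s: "s \<in> {1..K}"
  have "- grad (\<lambda>v. l s (xs s) (u1 s) v) (u2 s)
          - jacT (\<lambda>v. f s (xs s) (u1 s) v) (u2 s) (lam1 s) - nl2 s + nu2 s = 0"
    using COL_2 s costates unfolding OL_FOC_def
    by (simp add: grad_uminus[OF l_v] jacT_uminus[OF f_v])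
  then show "grad (\<lambda>v. l s (xs s) (u1 s) v) (u2 s)
          + jacT (\<lambda>v. f s (xs s) (u1 s) v) (u2 s) (lam1 s) - (nu2 s - nl2 s) = 0"
    by (simp add: algebra_simps)
next
  note l_u = differentiable_at_partials(2)[OF l_smooth, simplified]
  note f_u = differentiable_at_partials(2)[OF f_smooth, simplified]
  fix s assume s: "s \<in> {1..K}"
  have "grad (\<lambda>v. l s (xs s) v (u2 s)) (u1 s)
          + jacT (\<lambda>v. f s (xs s) v (u2 s)) (u1 s) (lam1 s) - nl1 s + nu1 s = 0"
    using COL_1 s unfolding OL_FOC_def by blast
  then show "grad (\<lambda>v. - l s (xs s) v (u2 s)) (u1 s)
          + jacT (\<lambda>v. f s (xs s) v (u2 s)) (u1 s) (lam2 s) - (nu1 s - nl1 s) = 0"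
    using costates s
    by (simp add: grad_uminus[OF l_u] jacT_uminus[OF f_u] algebra_simps)
qed

lemma OL_FOC_imp_FB_FOC:
  assumes OL: "OL_FOC K L Lfin F a b xs uo uq lam nl nu"
    and policy: "\<forall>s\<in>{1..K}. piq s (xs s) = uq s"
    and CFB1: "\<forall>s\<in>{1..K}. grad (\<lambda>v. L s (xs s) (uo s) v) (uq s)
                 + jacT (\<lambda>v. F s (xs s) (uo s) v) (uq s) (lam s) - psi s = 0"
    and policy_term: "\<forall>s\<in>{1..K}. jacT (piq s) (xs s) (psi s) = 0"
    and t: "t \<in> {1..K}"
  shows "FB_FOC K t L Lfin F a b piq xs uo uq lam nl nu psi"
proof -
  have CFB7: "\<forall>s\<in>{t+1..K}. grad (\<lambda>x. L s x (uo s) (uq s)) (xs s) - lam (s - 1)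
                + jacT (\<lambda>x. F s x (uo s) (uq s)) (xs s) (lam s)
                + jacT (piq s) (xs s) (psi s) = 0"
  proof
    fix s assume s: "s \<in> {t+1..K}"
    then have "grad (\<lambda>x. L s x (uo s) (uq s)) (xs s)
                 + jacT (\<lambda>x. F s x (uo s) (uq s)) (xs s) (lam s) - lam (s - 1) = 0"
      using OL t unfolding OL_FOC_def by auto
    moreover have "jacT (piq s) (xs s) (psi s) = 0"
      using policy_term s t by auto
    ultimately show "grad (\<lambda>x. L s x (uo s) (uq s)) (xs s) - lam (s - 1)
                + jacT (\<lambda>x. F s x (uo s) (uq s)) (xs s) (lam s)
                + jacT (piq s) (xs s) (psi s) = 0"
      by (simp add: algebra_simps)
  qed
  have "{t..K} \<subseteq> {1..K}" "{t+1..K} \<subseteq> {1..K}"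
    using t by auto
  with OL policy CFB1 CFB7 show ?thesis
    unfolding FB_FOC_def OL_FOC_def by (auto simp: subset_iff)
qed

theorem theorem2:
  fixes K :: nat
    and f :: "nat \<Rightarrow> real^'n \<Rightarrow> real^'m1 \<Rightarrow> real^'m2 \<Rightarrow> real^'n"
    and l :: "nat \<Rightarrow> real^'n \<Rightarrow> real^'m1 \<Rightarrow> real^'m2 \<Rightarrow> real"
    and lT :: "real^'n \<Rightarrow> real"
    and a1 b1 u1 :: "nat \<Rightarrow> real^'m1"
    and a2 b2 u2 :: "nat \<Rightarrow> real^'m2"
    and xs lam1 lam2 :: "nat \<Rightarrow> real^'n"
    and nl1 nu1 :: "nat \<Rightarrow> real^'m1"
    and nl2 nu2 :: "nat \<Rightarrow> real^'m2"
    and pi1 :: "nat \<Rightarrow> real^'n \<Rightarrow> real^'m1"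
    and pi2 :: "nat \<Rightarrow> real^'n \<Rightarrow> real^'m2"
  assumes f_smooth: "\<And>t x u v. (\<lambda>(x, u, v). f t x u v) differentiable (at (x, u, v))"
    and l_smooth: "\<And>t x u v. (\<lambda>(x, u, v). l t x u v) differentiable (at (x, u, v))"
    and lT_smooth: "\<And>x. lT differentiable (at x)"
    and OLNE: "local_OLNE K f l lT (xs 1) a1 b1 a2 b2 u1 u2"
    and COL_1: "OL_FOC K l lT f a1 b1 xs u1 u2 lam1 nl1 nu1"
    and COL_2: "OL_FOC K (\<lambda>t x u v. - l t x v u) (\<lambda>x. - lT x) (\<lambda>t x u v. f t x v u)
                  a2 b2 xs u2 u1 lam2 nl2 nu2"
    and SC_1: "strict_compl K a1 b1 u1 nl1 nu1"
    and SC_2: "strict_compl K a2 b2 u2 nl2 nu2"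
    and pi1_diff: "\<And>t x. pi1 t differentiable (at x)"
    and pi2_diff: "\<And>t x. pi2 t differentiable (at x)"
    and pi1_eq: "\<forall>t\<in>{1..K}. pi1 t (xs t) = u1 t"
    and pi2_eq: "\<forall>t\<in>{1..K}. pi2 t (xs t) = u2 t"
    and PA_1: "policy_assm K pi1 xs u1 a1 b1"
    and PA_2: "policy_assm K pi2 xs u2 a2 b2"
  shows "\<forall>t\<in>{1..K}.
           FB_FOC K t l lT f a1 b1 pi2 xs u1 u2 lam1 nl1 nu1 (\<lambda>s. nu2 s - nl2 s) \<and>
           FB_FOC K t (\<lambda>t x u v. - l t x v u) (\<lambda>x. - lT x) (\<lambda>t x u v. f t x v u)
                  a2 b2 pi1 xs u2 u1 lam2 nl2 nu2 (\<lambda>s. nu1 s - nl1 s)"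
proof -
  have costates: "\<forall>s\<in>{1..K}. lam2 s = - lam1 s"
    using zero_sum_costates_opposite[OF f_smooth l_smooth lT_smooth COL_1 COL_2] .
  note CFB1 = zero_sum_opponent_stationarity[OF f_smooth l_smooth COL_1 COL_2 costates]
  have policy_terms: "\<forall>s\<in>{1..K}. jacT (pi2 s) (xs s) (nu2 s - nl2 s) = 0"
    "\<forall>s\<in>{1..K}. jacT (pi1 s) (xs s) (nu1 s - nl1 s) = 0"
    using OL_FOC_policy_term_eq_0[OF COL_2 PA_2 pi2_diff]
      OL_FOC_policy_term_eq_0[OF COL_1 PA_1 pi1_diff] .
  show ?thesis
    using OL_FOC_imp_FB_FOC[OF COL_1 pi2_eq CFB1(1) policy_terms(1)]
      OL_FOC_imp_FB_FOC[OF COL_2 pi1_eq CFB1(2) policy_terms(2)] by blast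
qed

end
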